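(* Let $(L,[-,-,-],\varepsilon)$ be a ternary Leibniz color algebra and $P:L\to L$ an even linear map such that for all $x,y,z\in\mathcal{H}(L)$, $$[P(x),P(y),P(z)]=P\big([P(x),P(y),z]+[P(x),y,P(z)]+[x,P(y),P(z)]-[P(x),P(y),P(z)]\big).$$ Then $L$ is a ternary Leibniz color algebra with the bracket $\{x,y,z\}=[P(x),P(y),z]+[P(x),y,P(z)]+[x,P(y),P(z)]-[P(x),P(y),P(z)]$.
   Context: $G$ is an abelian group, $\mathbb{K}$ a field of characteristic $\neq 2$, $\mathcal{H}(V)$ the homogeneous elements of a $G$-graded space $V$; even maps preserve degree. A skew-symmetric bicharacter $\varepsilon:G\times G\to\mathbb{K}^*$ satisfies $\varepsilon(a,b)\varepsilon(b,a)=1$, $\varepsilon(a,b+c)=\varepsilon(a,b)\varepsilon(a,c)$, $\varepsilon(a+b,c)=\varepsilon(a,c)\varepsilon(b,c)$; $\varepsilon(x,y)$ means $\varepsilon$ of the degrees. A ternary Leibniz color algebra is a $G$-graded space with such $\varepsilon$ and an even trilinear $[-,-,-]$ satisfying $[[x,y,z],t,u]=[x,y,[z,t,u]]+\varepsilon(z,t+u)[x,[y,t,u],z]+\varepsilon(y+z,t+u)[[x,t,u],y,z]$ for all homogeneous $x,y,z,t,u$. *)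

theory Defs
  imports Main "HOL.Modules"
begin

definition graded_space :: "('k::field \<Rightarrow> 'v::ab_group_add \<Rightarrow> 'v) \<Rightarrow> ('g \<Rightarrow> 'v set) \<Rightarrow> bool" where
  "graded_space scale Vg \<longleftrightarrow> module scale
     \<and> (\<forall>g. module.subspace scale (Vg g))
     \<and> (\<forall>v. \<exists>S f. finite S \<and> (\<forall>g\<in>S. f g \<in> Vg g) \<and> v = sum f S)
     \<and> (\<forall>S f. finite S \<and> (\<forall>g\<in>S. f g \<in> Vg g) \<and> sum f S = 0 \<longrightarrow> (\<forall>g\<in>S. f g = 0))"

definition skew_bicharacter :: "('g::ab_group_add \<Rightarrow> 'g \<Rightarrow> 'k::field) \<Rightarrow> bool" where
  "skew_bicharacter eps \<longleftrightarrow>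
     (\<forall>a b. eps a b \<noteq> 0)
     \<and> (\<forall>a b. eps a b * eps b a = 1)
     \<and> (\<forall>a b c. eps a (b + c) = eps a b * eps a c)
     \<and> (\<forall>a b c. eps (a + b) c = eps a c * eps b c)"

definition linear_map :: "('k \<Rightarrow> 'v::ab_group_add \<Rightarrow> 'v) \<Rightarrow> ('v \<Rightarrow> 'v) \<Rightarrow> bool" where
  "linear_map scale f \<longleftrightarrow> (\<forall>x y. f (x + y) = f x + f y) \<and> (\<forall>c x. f (scale c x) = scale c (f x))"

definition even_map :: "('g \<Rightarrow> 'v set) \<Rightarrow> ('v \<Rightarrow> 'v) \<Rightarrow> bool" where
  "even_map Vg f \<longleftrightarrow> (\<forall>g x. x \<in> Vg g \<longrightarrow> f x \<in> Vg g)"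

definition trilinear :: "('k \<Rightarrow> 'v::ab_group_add \<Rightarrow> 'v) \<Rightarrow> ('v \<Rightarrow> 'v \<Rightarrow> 'v \<Rightarrow> 'v) \<Rightarrow> bool" where
  "trilinear scale br \<longleftrightarrow>
     (\<forall>y z. linear_map scale (\<lambda>x. br x y z))
     \<and> (\<forall>x z. linear_map scale (\<lambda>y. br x y z))
     \<and> (\<forall>x y. linear_map scale (\<lambda>z. br x y z))"

definition even_trimap :: "('g::plus \<Rightarrow> 'v set) \<Rightarrow> ('v \<Rightarrow> 'v \<Rightarrow> 'v \<Rightarrow> 'v) \<Rightarrow> bool" where
  "even_trimap Vg br \<longleftrightarrow>
     (\<forall>a b c x y z. x \<in> Vg a \<longrightarrow> y \<in> Vg b \<longrightarrow> z \<in> Vg c \<longrightarrow> br x y z \<in> Vg (a + b + c))"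

definition ternary_leibniz_color_algebra ::
  "('k::field \<Rightarrow> 'v::ab_group_add \<Rightarrow> 'v) \<Rightarrow> ('g::ab_group_add \<Rightarrow> 'v set) \<Rightarrow> ('g \<Rightarrow> 'g \<Rightarrow> 'k)
    \<Rightarrow> ('v \<Rightarrow> 'v \<Rightarrow> 'v \<Rightarrow> 'v) \<Rightarrow> bool" where
  "ternary_leibniz_color_algebra scale Vg eps br \<longleftrightarrow>
     graded_space scale Vg \<and> skew_bicharacter eps \<and> trilinear scale br \<and> even_trimap Vg br
     \<and> (\<forall>a b c d e x y z t u. x \<in> Vg a \<longrightarrow> y \<in> Vg b \<longrightarrow> z \<in> Vg c \<longrightarrow> t \<in> Vg d \<longrightarrow> u \<in> Vg e \<longrightarrow>
          br (br x y z) t u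
            = br x y (br z t u)
              + scale (eps c (d + e)) (br x (br y t u) z)
              + scale (eps (b + c) (d + e)) (br (br x t u) y z))"

end

theory Submission
  imports Defs
begin

text \<open>Write \<open>X = P x\<close>, \<open>Y = P y\<close>, etc.; the hypothesis on \<open>P\<close> says \<open>P {x,y,z} = [X,Y,Z]\<close>.
  Expanding the bracket \<open>{-,-,-}\<close> and using this on the inner brackets, the Leibniz defect of
  \<open>{-,-,-}\<close> at \<open>(x,y,z,t,u)\<close> becomes a combination of Leibniz defects of \<open>[-,-,-]\<close>: the five
  at \<open>(X,Y,Z,T,U)\<close> with one capital letter replaced by the lower-case one, minus twice the one at
  \<open>(X,Y,Z,T,U)\<close>. All of these vanish in \<open>L\<close>.\<close>

definition induced_bracket :: "('v::ab_group_add \<Rightarrow> 'v \<Rightarrow> 'v \<Rightarrow> 'v) \<Rightarrow> ('v \<Rightarrow> 'v) \<Rightarrow> 'v \<Rightarrow> 'v \<Rightarrow> 'v \<Rightarrow> 'v" where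
  "induced_bracket br P x y z =
     br (P x) (P y) z + br (P x) y (P z) + br x (P y) (P z) - br (P x) (P y) (P z)"

definition leibniz_defect ::
  "('k \<Rightarrow> 'v::ab_group_add \<Rightarrow> 'v) \<Rightarrow> ('g::ab_group_add \<Rightarrow> 'g \<Rightarrow> 'k) \<Rightarrow> ('v \<Rightarrow> 'v \<Rightarrow> 'v \<Rightarrow> 'v)
    \<Rightarrow> 'g \<Rightarrow> 'g \<Rightarrow> 'g \<Rightarrow> 'g \<Rightarrow> 'g \<Rightarrow> 'v \<Rightarrow> 'v \<Rightarrow> 'v \<Rightarrow> 'v \<Rightarrow> 'v \<Rightarrow> 'v" where
  "leibniz_defect scale eps br a b c d e x y z t u =
     br (br x y z) t u
       - (br x y (br z t u)
          + scale (eps c (d + e)) (br x (br y t u) z)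
          + scale (eps (b + c) (d + e)) (br (br x t u) y z))"

lemma ternary_leibniz_color_algebra_iff_defect:
  "ternary_leibniz_color_algebra scale Vg eps br \<longleftrightarrow>
     graded_space scale Vg \<and> skew_bicharacter eps \<and> trilinear scale br \<and> even_trimap Vg br
     \<and> (\<forall>a b c d e x y z t u. x \<in> Vg a \<longrightarrow> y \<in> Vg b \<longrightarrow> z \<in> Vg c \<longrightarrow> t \<in> Vg d \<longrightarrow> u \<in> Vg e \<longrightarrow>
          leibniz_defect scale eps br a b c d e x y z t u = 0)"
  unfolding ternary_leibniz_color_algebra_def leibniz_defect_def right_minus_eq ..

lemma linear_map_diff:
  assumes "linear_map scale f"
  shows "f (x - y) = f x - f y"
proof -
  have "f (x - y + y) = f (x - y) + f y"
    using assms unfolding linear_map_def by blast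
  then show ?thesis by (simp add: algebra_simps)
qed

lemma trilinear_induced_bracket:
  assumes "module scale" and "trilinear scale br" and "linear_map scale P"
  shows "trilinear scale (induced_bracket br P)"
proof -
  have "linear_map scale (\<lambda>x. br x y z)" "linear_map scale (\<lambda>y. br x y z)"
    "linear_map scale (\<lambda>z. br x y z)" for x y z
    using assms(2) unfolding trilinear_def by blast+
  then show ?thesis
    using assms(3) module.scale_right_distrib[OF assms(1)] module.scale_right_diff_distrib[OF assms(1)]
    unfolding trilinear_def linear_map_def induced_bracket_def
    by (simp add: algebra_simps)
qed

lemma even_trimap_induced_bracket:
  assumes "module scale" and "\<And>g. module.subspace scale (Vg g)"
    and "even_trimap Vg br" and "even_map Vg P"
  shows "even_trimap Vg (induced_bracket br P)"
  using assms unfolding even_trimap_def even_map_def induced_bracket_def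
  by (intro allI impI module.subspace_diff[OF assms(1,2)] module.subspace_add[OF assms(1,2)]) blast+

lemma leibniz_defect_induced_bracket:
  assumes M: "module scale" and TR: "trilinear scale br"
    and Pxyz: "P (induced_bracket br P x y z) = br (P x) (P y) (P z)"
    and Pztu: "P (induced_bracket br P z t u) = br (P z) (P t) (P u)"
    and Pytu: "P (induced_bracket br P y t u) = br (P y) (P t) (P u)"
    and Pxtu: "P (induced_bracket br P x t u) = br (P x) (P t) (P u)"
  shows "leibniz_defect scale eps (induced_bracket br P) a b c d e x y z t u
    = leibniz_defect scale eps br a b c d e (P x) (P y) (P z) (P t) u
      + leibniz_defect scale eps br a b c d e (P x) (P y) (P z) t (P u)
      + leibniz_defect scale eps br a b c d e (P x) (P y) z (P t) (P u)
      + leibniz_defect scale eps br a b c d e (P x) y (P z) (P t) (P u)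
      + leibniz_defect scale eps br a b c d e x (P y) (P z) (P t) (P u)
      - scale 2 (leibniz_defect scale eps br a b c d e (P x) (P y) (P z) (P t) (P u))"
proof -
  have l1: "linear_map scale (\<lambda>x. br x y z)" and l2: "linear_map scale (\<lambda>y. br x y z)"
    and l3: "linear_map scale (\<lambda>z. br x y z)" for x y z
    using TR unfolding trilinear_def by blast+
  note add_rules = l1[unfolded linear_map_def] l2[unfolded linear_map_def] l3[unfolded linear_map_def]
  note diff_rules = linear_map_diff[OF l1] linear_map_diff[OF l2] linear_map_diff[OF l3]
  have two: "scale 2 v = v + v" for v
    using module.scale_left_distrib[OF M, of 1 1 v] module.scale_one[OF M] by simp
  note inner_brackets = Pxyz Pztu Pytu Pxtu
  show ?thesis
    unfolding leibniz_defect_def induced_bracket_def[of br P] inner_brackets[unfolded induced_bracket_def]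
    by (simp add: add_rules diff_rules two module.scale_right_distrib[OF M]
        module.scale_right_diff_distrib[OF M])
qed

theorem mainTheorem13:
  fixes scale :: "'k::field \<Rightarrow> 'v::ab_group_add \<Rightarrow> 'v"
    and Vg :: "'g::ab_group_add \<Rightarrow> 'v set"
    and eps :: "'g \<Rightarrow> 'g \<Rightarrow> 'k"
    and br :: "'v \<Rightarrow> 'v \<Rightarrow> 'v \<Rightarrow> 'v"
    and P :: "'v \<Rightarrow> 'v"
  assumes char: "(2::'k) \<noteq> 0"
    and L: "ternary_leibniz_color_algebra scale Vg eps br"
    and Plin: "linear_map scale P"
    and Peven: "even_map Vg P"
    and Pid: "\<And>a b c x y z. x \<in> Vg a \<Longrightarrow> y \<in> Vg b \<Longrightarrow> z \<in> Vg c \<Longrightarrow>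
      br (P x) (P y) (P z)
        = P (br (P x) (P y) z + br (P x) y (P z) + br x (P y) (P z) - br (P x) (P y) (P z))"
  shows "ternary_leibniz_color_algebra scale Vg eps
           (\<lambda>x y z. br (P x) (P y) z + br (P x) y (P z) + br x (P y) (P z) - br (P x) (P y) (P z))"
proof -
  have GS: "graded_space scale Vg" and SK: "skew_bicharacter eps" and TR: "trilinear scale br"
    and ET: "even_trimap Vg br"
    and LB: "\<And>a b c d e x y z t u. x \<in> Vg a \<Longrightarrow> y \<in> Vg b \<Longrightarrow> z \<in> Vg c \<Longrightarrow> t \<in> Vg d \<Longrightarrow>
      u \<in> Vg e \<Longrightarrow> leibniz_defect scale eps br a b c d e x y z t u = 0"
    using L unfolding ternary_leibniz_color_algebra_iff_defect by blast+
  have M: "module scale" and SS: "\<And>g. module.subspace scale (Vg g)"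
    using GS unfolding graded_space_def by blast+
  have PV: "\<And>g x. x \<in> Vg g \<Longrightarrow> P x \<in> Vg g"
    using Peven unfolding even_map_def by blast
  have PI: "\<And>a b c x y z. x \<in> Vg a \<Longrightarrow> y \<in> Vg b \<Longrightarrow> z \<in> Vg c \<Longrightarrow>
      P (induced_bracket br P x y z) = br (P x) (P y) (P z)"
    unfolding induced_bracket_def using Pid by metis
  have "leibniz_defect scale eps (induced_bracket br P) a b c d e x y z t u = 0"
    if x: "x \<in> Vg a" and y: "y \<in> Vg b" and z: "z \<in> Vg c" and t: "t \<in> Vg d" and u: "u \<in> Vg e"
    for a b c d e x y z t u
  proof -
    have X: "P x \<in> Vg a" and Y: "P y \<in> Vg b" and Z: "P z \<in> Vg c" and T: "P t \<in> Vg d"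
      and U: "P u \<in> Vg e"
      using PV x y z t u by blast+
    show ?thesis
      unfolding leibniz_defect_induced_bracket[OF M TR PI[OF x y z] PI[OF z t u] PI[OF y t u] PI[OF x t u]]
        LB[OF X Y Z T u] LB[OF X Y Z t U] LB[OF X Y z T U] LB[OF X y Z T U]
        LB[OF x Y Z T U] LB[OF X Y Z T U] module.scale_zero_right[OF M]
      by simp
  qed
  then show ?thesis
    unfolding induced_bracket_def[symmetric, abs_def] ternary_leibniz_color_algebra_iff_defect
    using GS SK trilinear_induced_bracket[OF M TR Plin]
      even_trimap_induced_bracket[OF M SS ET Peven]
    by blast
qed

end
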